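(* Consider a rule of the PJR-Exact family run on $(\mathcal{A},k)$, and fix $j$ with $1\le j\le k$ such that iterations $1,\dots,j$ are all normal. Then for every voter $i\in N$, either $|A_i\cap W_j|\ge \ell_j(i)$ or $f_i^j\ge \frac{\ell_j(i)-|A_i\cap W_j|}{\ell_j(i)}$.
   Context: Setting: voters $N=\{1,\dots,n\}$, candidates $C=\{c_1,\dots,c_m\}$, approval ballots $A_i\subseteq C$, $\mathcal{A}=(A_1,\dots,A_n)$, $k$ a positive integer with $k\le|C|$, $q=n/k$, $N_c=\{i: c\in A_i\}$. Convention: $\max\emptyset=0$. Dissatisfaction level: for $W\subseteq C$ with $|W|\le k$ and $c\in C\setminus W$, $\ell(c,W)$ is the largest nonnegative integer $\ell$ with $\ell=\lfloor \frac{k}{n}|\{i\in N: c\in A_i,\ |A_i\cap W|<\ell\}|\rfloor$. PJR-Exact family: iterative procedures selecting $w_1,\dots,w_k$, $W_0=\emptyset$, $W_j=W_{j-1}\cup\{w_j\}$, $w_j\notin W_{j-1}$, with vote fractions $f_i^0=1$, $0\le f_i^j\le f_i^{j-1}$, such that at each iteration $j$: (a) $f_i^j=f_i^{j-1}$ for $i\notin N_{w_j}$; (b) with $s=\sum_{i\in N_{w_j}}f_i^{j-1}$, if $s>q$ then $\sum_{i\in N_{w_j}}(f_i^{j-1}-f_i^j)=q$, and if $s\le q$ then $f_i^j=0$ for all $i\in N_{w_j}$; (c) if some $c\in C\setminus W_{j-1}$ has $\sum_{i\in N_c}f_i^{j-1}\ge q$ then $\sum_{i\in N_{w_j}}f_i^{j-1}\ge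 q$. Notation along a run: $\ell_j(c)=\ell(c,W_j)$ for $c\in C\setminus W_j$; $\ell_j(i)=\max_{c\in A_i\setminus W_j}\ell_j(c)$; for $c\in C\setminus W_j$ and $i\in N_c$, $\ell_j(i,c)=\max_{c'\in A_i\setminus(W_j\cup\{c\})}\ell_j(c')$; $g_i^j(c)=0$ if $\ell_j(i,c)\le|A_i\cap W_j|$ and $g_i^j(c)=\frac{\ell_j(i,c)-|A_i\cap W_j|-1}{\ell_j(i,c)}$ otherwise. Normal state: $c\in C\setminus W_j$ is in normal state after $j$ iterations if (1) for each $i\in N_c$ with $\ell_j(i,c)>|A_i\cap W_j|$ we have $f_i^j\ge\frac{\ell_j(i,c)-|A_i\cap W_j|}{\ell_j(i,c)}$, and (2) $\sum_{i\in N_c}(f_i^j-g_i^j(c))\ge q$. Normal iteration: iteration $j$ ($1\le j\le k$) is normal if $w_j$ is in normal state after $j-1$ iterations and, for each $i\in N_{w_j}$ with $\ell_{j-1}(i,w_j)>|A_i\cap W_{j-1}|$, $f_i^j\ge\frac{\ell_{j-1}(i,w_j)-|A_i\cap W_j|}{\ell_{j-1}(i,w_j)}$. *)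

theory Defs
  imports Main Complex_Main
begin

definition quota :: "'v set \<Rightarrow> nat \<Rightarrow> real" where
  "quota N k = real (card N) / real k"

definition supp :: "'v set \<Rightarrow> ('v \<Rightarrow> 'c set) \<Rightarrow> 'c \<Rightarrow> 'v set" where
  "supp N A c = {i \<in> N. c \<in> A i}"

definition dlevel :: "'v set \<Rightarrow> ('v \<Rightarrow> 'c set) \<Rightarrow> nat \<Rightarrow> 'c set \<Rightarrow> 'c \<Rightarrow> nat" where
  "dlevel N A k W c =
     (GREATEST l::nat. int l =
        \<lfloor>real k / real (card N) * real (card {i \<in> N. c \<in> A i \<and> card (A i \<inter> W) < l})\<rfloor>)"

definition Wset :: "(nat \<Rightarrow> 'c) \<Rightarrow> nat \<Rightarrow> 'c set" where
  "Wset w j = w ` {1..j}"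

definition lvoter :: "'v set \<Rightarrow> ('v \<Rightarrow> 'c set) \<Rightarrow> nat \<Rightarrow> 'c set \<Rightarrow> 'v \<Rightarrow> nat" where
  "lvoter N A k W i = Max (insert 0 (dlevel N A k W ` (A i - W)))"

definition lvoter_ex :: "'v set \<Rightarrow> ('v \<Rightarrow> 'c set) \<Rightarrow> nat \<Rightarrow> 'c set \<Rightarrow> 'v \<Rightarrow> 'c \<Rightarrow> nat" where
  "lvoter_ex N A k W i c = Max (insert 0 (dlevel N A k W ` (A i - (W \<union> {c}))))"

definition gval :: "'v set \<Rightarrow> ('v \<Rightarrow> 'c set) \<Rightarrow> nat \<Rightarrow> 'c set \<Rightarrow> 'v \<Rightarrow> 'c \<Rightarrow> real" where
  "gval N A k W i c =
     (let L = lvoter_ex N A k W i c in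
      if L \<le> card (A i \<inter> W) then 0
      else (real L - real (card (A i \<inter> W)) - 1) / real L)"

(* PJR-Exact run: selected candidates w 1, ..., w k and vote fractions f j i *)
definition pjr_exact_run ::
  "'v set \<Rightarrow> 'c set \<Rightarrow> ('v \<Rightarrow> 'c set) \<Rightarrow> nat \<Rightarrow> (nat \<Rightarrow> 'c) \<Rightarrow> (nat \<Rightarrow> 'v \<Rightarrow> real) \<Rightarrow> bool" where
  "pjr_exact_run N C A k w f \<longleftrightarrow>
     (\<forall>i\<in>N. f 0 i = 1) \<and>
     (\<forall>j\<in>{1..k}.
        w j \<in> C \<and> w j \<notin> Wset w (j - 1) \<and>
        (\<forall>i\<in>N. 0 \<le> f j i \<and> f j i \<le> f (j - 1) i) \<and>
        (\<forall>i\<in>N - supp N A (w j). f j i = f (j - 1) i) \<and>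
        (let s = (\<Sum>i\<in>supp N A (w j). f (j - 1) i) in
           (s > quota N k \<longrightarrow> (\<Sum>i\<in>supp N A (w j). f (j - 1) i - f j i) = quota N k) \<and>
           (s \<le> quota N k \<longrightarrow> (\<forall>i\<in>supp N A (w j). f j i = 0))) \<and>
        ((\<exists>c\<in>C - Wset w (j - 1). (\<Sum>i\<in>supp N A c. f (j - 1) i) \<ge> quota N k) \<longrightarrow>
           (\<Sum>i\<in>supp N A (w j). f (j - 1) i) \<ge> quota N k))"

definition normal_state ::
  "'v set \<Rightarrow> 'c set \<Rightarrow> ('v \<Rightarrow> 'c set) \<Rightarrow> nat \<Rightarrow> 'c set \<Rightarrow> ('v \<Rightarrow> real) \<Rightarrow> 'c \<Rightarrow> bool" where
  "normal_state N C A k W phi c \<longleftrightarrow>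
     c \<in> C - W \<and>
     (\<forall>i\<in>supp N A c. lvoter_ex N A k W i c > card (A i \<inter> W) \<longrightarrow>
        phi i \<ge> (real (lvoter_ex N A k W i c) - real (card (A i \<inter> W))) / real (lvoter_ex N A k W i c)) \<and>
     (\<Sum>i\<in>supp N A c. phi i - gval N A k W i c) \<ge> quota N k"

definition normal_iteration ::
  "'v set \<Rightarrow> 'c set \<Rightarrow> ('v \<Rightarrow> 'c set) \<Rightarrow> nat \<Rightarrow> (nat \<Rightarrow> 'c) \<Rightarrow> (nat \<Rightarrow> 'v \<Rightarrow> real) \<Rightarrow> nat \<Rightarrow> bool" where
  "normal_iteration N C A k w f j \<longleftrightarrow>
     normal_state N C A k (Wset w (j - 1)) (f (j - 1)) (w j) \<and>
     (\<forall>i\<in>supp N A (w j).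
        lvoter_ex N A k (Wset w (j - 1)) i (w j) > card (A i \<inter> Wset w (j - 1)) \<longrightarrow>
        f j i \<ge> (real (lvoter_ex N A k (Wset w (j - 1)) i (w j)) - real (card (A i \<inter> Wset w j)))
                 / real (lvoter_ex N A k (Wset w (j - 1)) i (w j)))"

end

theory Submission
  imports Defs
begin

text \<open>
  A voter who does not approve the newly elected
  candidate keeps her vote fraction and her number of approved winners, while her
  dissatisfaction level can only drop. A voter who does approve it is covered by the
  normality of the iteration, because her new level is at most her level excluding the
  elected candidate, and the bound (l - a) / l increases with l.
\<close>

definition funded :: "'v set \<Rightarrow> ('v \<Rightarrow> 'c set) \<Rightarrow> nat \<Rightarrow> 'c set \<Rightarrow> ('v \<Rightarrow> real) \<Rightarrow> 'v \<Rightarrow> bool" where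
  "funded N A k W phi i \<longleftrightarrow>
     lvoter N A k W i \<le> card (A i \<inter> W) \<or>
     (real (lvoter N A k W i) - real (card (A i \<inter> W))) / real (lvoter N A k W i) \<le> phi i"

lemma Wset_Suc: "Wset w (Suc j) = insert (w (Suc j)) (Wset w j)"
  unfolding Wset_def by (simp add: atLeastAtMostSuc_conv)

lemma finite_Wset: "finite (Wset w j)"
  unfolding Wset_def by simp

lemma diff_divide_self_mono:
  fixes a l L :: real
  assumes "0 \<le> a" "0 < l" "l \<le> L"
  shows "(l - a) / l \<le> (L - a) / L"
proof -
  have "a / L \<le> a / l" using assms by (intro divide_left_mono) auto
  moreover have "(l - a) / l = 1 - a / l" "(L - a) / L = 1 - a / L"
    using assms by (auto simp: field_simps)
  ultimately show ?thesis by simp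
qed

text \<open>
  The greatest fixed point of a function below a monotone, bounded, nonnegative \<open>h\<close>
  is below the greatest fixed point of \<open>h\<close>: the greatest post-fixed point \<open>m\<close> of \<open>h\<close>
  is itself a fixed point, since \<open>h m\<close> is again a post-fixed point.
\<close>
lemma Greatest_fixpoint_mono:
  fixes g h :: "nat \<Rightarrow> int" and b :: nat
  assumes h_mono: "\<And>l l'. l \<le> l' \<Longrightarrow> h l \<le> h l'"
    and g_le_h: "\<And>l. g l \<le> h l" and h_bounded: "\<And>l. h l \<le> int b"
    and h_nonneg: "\<And>l. 0 \<le> h l" and g0: "g 0 = 0"
  shows "(GREATEST l. int l = g l) \<le> (GREATEST l. int l = h l)"
proof -
  have post_bounded: "y \<le> b" if "int y \<le> h y" for y
    using that h_bounded[of y] by linarith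
  have g_fix_bounded: "y \<le> b" if "int y = g y" for y
    using that g_le_h[of y] by (intro post_bounded) simp
  have h_fix_bounded: "y \<le> b" if "int y = h y" for y
    using that by (intro post_bounded) simp
  define l where "l = (GREATEST l. int l = g l)"
  have "int l = g l"
    unfolding l_def by (rule GreatestI_nat[where k = 0]) (use g0 g_fix_bounded in simp_all)
  hence l_post: "int l \<le> h l" using g_le_h by simp
  define m where "m = (GREATEST l. int l \<le> h l)"
  have l_le_m: "l \<le> m"
    unfolding m_def using l_post post_bounded by (rule Greatest_le_nat[where P = "\<lambda>l. int l \<le> h l"])
  have m_post: "int m \<le> h m"
    unfolding m_def using l_post post_bounded by (rule GreatestI_nat[where P = "\<lambda>l. int l \<le> h l"])
  have "int (nat (h m)) \<le> h (nat (h m))"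
    using h_mono[of m "nat (h m)"] m_post h_nonneg[of m] by simp
  hence "nat (h m) \<le> m"
    unfolding m_def using post_bounded by (rule Greatest_le_nat[where P = "\<lambda>l. int l \<le> h l"])
  hence "int m = h m" using m_post h_nonneg[of m] by simp
  hence "m \<le> (GREATEST l. int l = h l)"
    using h_fix_bounded by (rule Greatest_le_nat[where P = "\<lambda>l. int l = h l"])
  thus ?thesis using l_le_m l_def by simp
qed

lemma dlevel_antimono:
  assumes "finite N" and "W \<subseteq> W'" and "finite W'"
  shows "dlevel N A k W' c \<le> dlevel N A k W c"
proof -
  define H where
    "H W l = \<lfloor>real k / real (card N) * real (card {i \<in> N. c \<in> A i \<and> card (A i \<inter> W) < l})\<rfloor>"
    for W l
  have H_mono: "H W l \<le> H W' l'" if "\<And>i. card (A i \<inter> W) < l \<Longrightarrow> card (A i \<inter> W') < l'"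
    for W W' l l'
  proof -
    have "card {i \<in> N. c \<in> A i \<and> card (A i \<inter> W) < l} \<le> card {i \<in> N. c \<in> A i \<and> card (A i \<inter> W') < l'}"
      using \<open>finite N\<close> that by (intro card_mono) auto
    thus ?thesis unfolding H_def by (intro floor_mono mult_left_mono) auto
  qed
  have H_bounded: "H W l \<le> int k" for W l
  proof (cases "card N = 0")
    case False
    have "card {i \<in> N. c \<in> A i \<and> card (A i \<inter> W) < l} \<le> card N"
      using \<open>finite N\<close> by (intro card_mono) auto
    hence "real k / real (card N) * real (card {i \<in> N. c \<in> A i \<and> card (A i \<inter> W) < l})
          \<le> real k / real (card N) * real (card N)"
      by (intro mult_left_mono) auto
    also have "\<dots> = real k" using False by simp
    finally show ?thesis unfolding H_def by linarith
  qed (simp add: H_def)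
  have winners_mono: "card (A i \<inter> W) \<le> card (A i \<inter> W')" for i
    using assms(2,3) by (intro card_mono) auto
  have "(GREATEST l. int l = H W' l) \<le> (GREATEST l. int l = H W l)"
  proof (rule Greatest_fixpoint_mono[where b = k])
    show "H W l \<le> H W l'" if "l \<le> l'" for l l'
      using that by (intro H_mono) simp
    show "H W' l \<le> H W l" for l
      using winners_mono by (intro H_mono) (rule le_less_trans)
  qed (use H_bounded in \<open>simp_all add: H_def\<close>)
  thus ?thesis unfolding dlevel_def H_def by simp
qed

lemma Max_insert_0_image_mono:
  fixes g h :: "'a \<Rightarrow> nat"
  assumes "finite B" and "B' \<subseteq> B" and "\<And>x. x \<in> B' \<Longrightarrow> g x \<le> h x"
  shows "Max (insert 0 (g ` B')) \<le> Max (insert 0 (h ` B))"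
proof -
  have h_le_Max: "h x \<le> Max (insert 0 (h ` B))" if "x \<in> B" for x
    using assms(1) that by (intro Max_ge) auto
  show ?thesis
    using assms finite_subset[OF assms(2,1)]
    by (intro Max.boundedI) (auto intro: le_trans[OF _ h_le_Max])
qed

lemma lvoter_antimono:
  assumes "finite N" and "finite (A i)" and "W \<subseteq> W'" and "finite W'"
  shows "lvoter N A k W' i \<le> lvoter N A k W i"
  unfolding lvoter_def using assms
  by (intro Max_insert_0_image_mono dlevel_antimono) auto

lemma lvoter_insert_le_lvoter_ex:
  assumes "finite N" and "finite (A i)" and "finite W"
  shows "lvoter N A k (insert c W) i \<le> lvoter_ex N A k W i c"
  unfolding lvoter_def lvoter_ex_def using assms
  by (intro Max_insert_0_image_mono dlevel_antimono) auto

lemma funded_full: "phi i = 1 \<Longrightarrow> funded N A k W phi i"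
  unfolding funded_def by (cases "lvoter N A k W i = 0") (auto simp: divide_le_eq_1)

lemma funded_insert_nonsupporter:
  assumes "finite N" and "finite (A i)" and "finite W"
    and "c \<notin> A i" and "phi' i = phi i" and "funded N A k W phi i"
  shows "funded N A k (insert c W) phi' i"
proof -
  define l where "l = lvoter N A k W i"
  define l' where "l' = lvoter N A k (insert c W) i"
  define a where "a = card (A i \<inter> W)"
  have same_winners: "card (A i \<inter> insert c W) = a"
    unfolding a_def using \<open>c \<notin> A i\<close> by simp
  have "l' \<le> l"
    unfolding l_def l'_def using assms(1-3) by (intro lvoter_antimono) auto
  show ?thesis
  proof (cases "a < l'")
    case True
    with \<open>l' \<le> l\<close> assms(6) have "(real l - real a) / real l \<le> phi i"
      unfolding funded_def l_def a_def by simp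
    moreover have "(real l' - real a) / real l' \<le> (real l - real a) / real l"
      using True \<open>l' \<le> l\<close> by (intro diff_divide_self_mono) auto
    ultimately show ?thesis
      unfolding funded_def same_winners l'_def[symmetric] using assms(5) by (intro disjI2) linarith
  next
    case False
    thus ?thesis unfolding funded_def same_winners l'_def[symmetric] by (intro disjI1) simp
  qed
qed

lemma funded_insert_supporter:
  assumes "finite N" and "finite (A i)" and "finite W"
    and normal: "lvoter_ex N A k W i c > card (A i \<inter> W) \<Longrightarrow>
        phi' i \<ge> (real (lvoter_ex N A k W i c) - real (card (A i \<inter> insert c W)))
                 / real (lvoter_ex N A k W i c)"
  shows "funded N A k (insert c W) phi' i"
proof -
  define L where "L = lvoter_ex N A k W i c"
  define l' where "l' = lvoter N A k (insert c W) i"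
  define a' where "a' = card (A i \<inter> insert c W)"
  have "l' \<le> L"
    unfolding l'_def L_def using assms(1-3) by (rule lvoter_insert_le_lvoter_ex)
  have "card (A i \<inter> W) \<le> a'"
    unfolding a'_def using \<open>finite W\<close> by (intro card_mono) auto
  show ?thesis
  proof (cases "a' < l'")
    case True
    with \<open>l' \<le> L\<close> \<open>card (A i \<inter> W) \<le> a'\<close> have "card (A i \<inter> W) < L"
      by linarith
    hence "(real L - real a') / real L \<le> phi' i"
      unfolding L_def a'_def by (rule normal)
    moreover have "(real l' - real a') / real l' \<le> (real L - real a') / real L"
      using True \<open>l' \<le> L\<close> by (intro diff_divide_self_mono) auto
    ultimately show ?thesis
      unfolding funded_def l'_def[symmetric] a'_def[symmetric] by (intro disjI2) linarith
  next
    case False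
    thus ?thesis unfolding funded_def l'_def[symmetric] a'_def[symmetric] by (intro disjI1) simp
  qed
qed

lemma funded_along_normal_run:
  assumes "finite N" and "\<forall>i\<in>N. finite (A i)" and run: "pjr_exact_run N C A k w f"
  shows "j \<le> k \<Longrightarrow> \<forall>j'\<in>{1..j}. normal_iteration N C A k w f j' \<Longrightarrow>
           i \<in> N \<Longrightarrow> funded N A k (Wset w j) (f j) i"
proof (induction j arbitrary: i)
  case 0
  with run show ?case by (intro funded_full) (auto simp: pjr_exact_run_def)
next
  case (Suc j)
  have funded_j: "funded N A k (Wset w j) (f j) i"
    using Suc by auto
  show ?case
  proof (cases "w (Suc j) \<in> A i")
    case True
    have "normal_iteration N C A k w f (Suc j)" using Suc.prems(2) by auto
    with True \<open>i \<in> N\<close> have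
      "card (A i \<inter> Wset w j) < lvoter_ex N A k (Wset w j) i (w (Suc j)) \<Longrightarrow>
        f (Suc j) i \<ge> (real (lvoter_ex N A k (Wset w j) i (w (Suc j)))
                         - real (card (A i \<inter> Wset w (Suc j))))
                        / real (lvoter_ex N A k (Wset w j) i (w (Suc j)))"
      by (auto simp: normal_iteration_def supp_def)
    with \<open>i \<in> N\<close> show ?thesis
      unfolding Wset_Suc using assms(1,2)
      by (intro funded_insert_supporter) (auto simp: finite_Wset)
  next
    case False
    have "f (Suc j) i = f j i"
      using run False \<open>i \<in> N\<close> \<open>Suc j \<le> k\<close> by (auto simp: pjr_exact_run_def supp_def)
    with False funded_j \<open>i \<in> N\<close> show ?thesis
      unfolding Wset_Suc using assms(1,2)
      by (intro funded_insert_nonsupporter) (auto simp: finite_Wset)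
  qed
qed

theorem mainTheorem3:
  fixes N :: "'v set" and C :: "'c set" and A :: "'v \<Rightarrow> 'c set"
    and k j :: nat and w :: "nat \<Rightarrow> 'c" and f :: "nat \<Rightarrow> 'v \<Rightarrow> real"
  assumes "finite N" and "finite C" and "\<forall>i\<in>N. A i \<subseteq> C"
    and "0 < k" and "k \<le> card C"
    and "pjr_exact_run N C A k w f"
    and "1 \<le> j" and "j \<le> k"
    and "\<forall>j'\<in>{1..j}. normal_iteration N C A k w f j'"
  shows "\<forall>i\<in>N. card (A i \<inter> Wset w j) \<ge> lvoter N A k (Wset w j) i \<or>
           f j i \<ge> (real (lvoter N A k (Wset w j) i) - real (card (A i \<inter> Wset w j)))
                    / real (lvoter N A k (Wset w j) i)"
proof
  fix i assume "i \<in> N"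
  have "\<forall>i\<in>N. finite (A i)" using assms(2,3) finite_subset by blast
  with assms(1,6,8,9) \<open>i \<in> N\<close> have "funded N A k (Wset w j) (f j) i"
    by (intro funded_along_normal_run)
  thus "card (A i \<inter> Wset w j) \<ge> lvoter N A k (Wset w j) i \<or>
        f j i \<ge> (real (lvoter N A k (Wset w j) i) - real (card (A i \<inter> Wset w j)))
                 / real (lvoter N A k (Wset w j) i)"
    unfolding funded_def .
qed

end
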